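(* Assume that each $f_m^j$ is $L$-smooth. In the setting described in the context, for every meta-epoch $t$, $$\Big\|\frac1R\sum_{r=0}^{R-1}\frac1C\sum_{m\in S_t^{\lambda_r}}\frac1N\sum_{j=0}^{N-1}\nabla f_m^{\pi_m^j}(x^{r,j}_{m,t})\Big\|^2\le 2L^2V_t+4L\big(f(x_t)-f(x_\star)\big),$$ where $V_t=\frac{1}{RCN}\sum_{r=0}^{R-1}\sum_{m\in S_t^{\lambda_r}}\sum_{j=0}^{N-1}\|x_t-x^{r,j}_{m,t}\|^2$.
   Context: Setting. There are $M$ clients, each holding $N$ data points. For $m\in[M]$ and $j\in\{0,\dots,N-1\}$, $f_m^j:\mathbb{R}^d\to\mathbb{R}$ is differentiable. Define $f_m=\frac1N\sum_j f_m^j$ and $f=\frac1M\sum_m f_m$, and let $x_\star$ be a minimizer of $f$. $L$-smooth means the gradient is $L$-Lipschitz. Algorithm RR-CLI. Let $C$ be a cohort size with $M=CR$, and let $\gamma,\eta,\theta>0$. In meta-epoch $t$: - The clients are partitioned into $R$ disjoint cohorts of size $C$, taken in order $S_t^{\lambda_0},\dots,S_t^{\lambda_{R-1}}$. - Each client $m$ has a permutation $\pi_m=(\pi_m^0,\dots,\pi_m^{N-1})$ of its data indices. - Set $x_t^0=x_t$. For $r=0,\dots,R-1$ and $m\in S_t^{\lambda_r}$, set $x^{r,0}_{m,t}=x^r_t$ and $x^{r,j+1}_{m,t}=x^{r,j}_{m,t}-\gamma\nabla f_m^{\pi_m^j}(x^{r,j}_{m,t})$ for $j=0,\dots,N-1$.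 - The server sets $x^{r+1}_t=x^r_t-\eta\frac1C\sum_{m\in S_t^{\lambda_r}}\frac{x^r_t-x^{r,N}_{m,t}}{\gamma N}$. - Finally, $x_{t+1}=x_t-\theta\frac{x_t-x^R_t}{\eta R}$. *)

theory Defs
  imports "HOL-Analysis.Analysis"
begin

definition fbar :: "(nat \<Rightarrow> nat \<Rightarrow> 'a \<Rightarrow> real) \<Rightarrow> nat \<Rightarrow> nat \<Rightarrow> 'a \<Rightarrow> real" where
  "fbar f M N x = (1 / real M) * (\<Sum>m<M. (1 / real N) * (\<Sum>j<N. f m j x))"

text \<open>Local iterates of client m started at y with permutation p:
  loc g gamma p m y j = x^{r,j}_{m,t} when y = x^r_t.  g m j is the gradient of f_m^j.\<close>
primrec loc :: "(nat \<Rightarrow> nat \<Rightarrow> 'a::real_vector \<Rightarrow> 'a) \<Rightarrow> real \<Rightarrow> (nat \<Rightarrow> nat) \<Rightarrow> nat \<Rightarrow> 'a \<Rightarrow> nat \<Rightarrow> 'a" where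
  "loc g \<gamma> p m y 0 = y"
| "loc g \<gamma> p m y (Suc j) = loc g \<gamma> p m y j - \<gamma> *\<^sub>R g m (p j) (loc g \<gamma> p m y j)"

text \<open>Server iterates within one meta-epoch: srv ... S p y r = x^r_t when y = x_t,
  S r is the r-th cohort (in the order taken), p m the permutation of client m.\<close>
primrec srv :: "(nat \<Rightarrow> nat \<Rightarrow> 'a::real_vector \<Rightarrow> 'a) \<Rightarrow> real \<Rightarrow> real \<Rightarrow> nat \<Rightarrow> nat
    \<Rightarrow> (nat \<Rightarrow> nat set) \<Rightarrow> (nat \<Rightarrow> nat \<Rightarrow> nat) \<Rightarrow> 'a \<Rightarrow> nat \<Rightarrow> 'a" where
  "srv g \<gamma> \<eta> N C S p y 0 = y"
| "srv g \<gamma> \<eta> N C S p y (Suc r) =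
     srv g \<gamma> \<eta> N C S p y r - \<eta> *\<^sub>R ((1 / real C) *\<^sub>R
       (\<Sum>m\<in>S r. (1 / (\<gamma> * real N)) *\<^sub>R
          (srv g \<gamma> \<eta> N C S p y r - loc g \<gamma> (p m) m (srv g \<gamma> \<eta> N C S p y r) N)))"

text \<open>Outer iterates x_t of RR-CLI: S t r is the r-th cohort in meta-epoch t,
  p t m the permutation of client m used in meta-epoch t.\<close>
primrec meta :: "(nat \<Rightarrow> nat \<Rightarrow> 'a::real_vector \<Rightarrow> 'a) \<Rightarrow> real \<Rightarrow> real \<Rightarrow> real \<Rightarrow> nat \<Rightarrow> nat \<Rightarrow> nat
    \<Rightarrow> (nat \<Rightarrow> nat \<Rightarrow> nat set) \<Rightarrow> (nat \<Rightarrow> nat \<Rightarrow> nat \<Rightarrow> nat) \<Rightarrow> 'a \<Rightarrow> nat \<Rightarrow> 'a" where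
  "meta g \<gamma> \<eta> \<theta> N C R S p x0 0 = x0"
| "meta g \<gamma> \<eta> \<theta> N C R S p x0 (Suc t) =
     meta g \<gamma> \<eta> \<theta> N C R S p x0 t - (\<theta> / (\<eta> * real R)) *\<^sub>R
       (meta g \<gamma> \<eta> \<theta> N C R S p x0 t
          - srv g \<gamma> \<eta> N C (S t) (p t) (meta g \<gamma> \<eta> \<theta> N C R S p x0 t) R)"

end

theory Submission
  imports Defs
begin

text \<open>Split the averaged gradient at the local iterates into the same average taken at
  \<open>x\<^sub>t\<close> plus a drift term. Because the cohorts partition the \<open>M = CR\<close> clients and each
  \<open>\<pi>\<^sub>m\<close> permutes the data of client \<open>m\<close>, the first part is exactly \<open>\<nabla>f(x\<^sub>t)\<close>.
  By Jensen's inequality and \<open>L\<close>-smoothness the drift has squared norm at most \<open>L\<^sup>2 V\<^sub>t\<close>.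
  The descent lemma for the \<open>L\<close>-smooth function \<open>f\<close>, applied to a gradient step of length
  \<open>1/L\<close> from \<open>x\<^sub>t\<close>, gives \<open>\<parallel>\<nabla>f(x\<^sub>t)\<parallel>\<^sup>2 \<le> 2L(f(x\<^sub>t) - f(x\<^sub>\<star>))\<close>; finally
  \<open>\<parallel>a + b\<parallel>\<^sup>2 \<le> 2\<parallel>a\<parallel>\<^sup>2 + 2\<parallel>b\<parallel>\<^sup>2\<close>.\<close>

lemma lipschitz_constant_nonneg:
  fixes g :: "'a::euclidean_space \<Rightarrow> 'b::real_normed_vector"
  assumes "\<And>x y. norm (g x - g y) \<le> L * norm (x - y)"
  shows "0 \<le> L"
proof -
  obtain b :: 'a where "b \<in> Basis" using nonempty_Basis by blast
  then have "norm (b - 0) = 1" by simp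
  then have "norm (g b - g 0) \<le> L" using assms[of b 0] by simp
  then show ?thesis using norm_ge_zero order_trans by blast
qed

lemma descent_lemma:
  fixes h :: "'a::real_inner \<Rightarrow> real" and gr :: "'a \<Rightarrow> 'a"
  assumes deriv: "\<And>x. (h has_derivative (\<lambda>v. gr x \<bullet> v)) (at x)"
    and lip: "\<And>x y. norm (gr x - gr y) \<le> L * norm (x - y)"
  shows "h y \<le> h x + gr x \<bullet> (y - x) + L / 2 * (norm (y - x))\<^sup>2"
proof -
  define u where "u = y - x"
  define \<phi> where "\<phi> s = h (x + s *\<^sub>R u) - s * (gr x \<bullet> u) - L / 2 * s\<^sup>2 * (norm u)\<^sup>2" for s :: real
  have h_line: "((\<lambda>s. h (x + s *\<^sub>R u)) has_real_derivative gr (x + s *\<^sub>R u) \<bullet> u) (at s)" for s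
  proof -
    have "((\<lambda>s. h (x + s *\<^sub>R u)) has_derivative (\<lambda>d. gr (x + s *\<^sub>R u) \<bullet> (d *\<^sub>R u))) (at s)"
      by (rule has_derivative_compose[OF _ deriv]) (auto intro!: derivative_eq_intros)
    then show ?thesis
      unfolding has_field_derivative_def by (rule has_derivative_eq_rhs) (simp add: fun_eq_iff)
  qed
  have \<phi>_deriv: "(\<phi> has_real_derivative (gr (x + s *\<^sub>R u) - gr x) \<bullet> u - L * s * (norm u)\<^sup>2) (at s)" for s
    unfolding \<phi>_def by (auto intro!: derivative_eq_intros h_line simp: inner_diff_left)
  have "(gr (x + s *\<^sub>R u) - gr x) \<bullet> u \<le> L * s * (norm u)\<^sup>2" if "0 \<le> s" for s
  proof -
    have "(gr (x + s *\<^sub>R u) - gr x) \<bullet> u \<le> norm (gr (x + s *\<^sub>R u) - gr x) * norm u"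
      by (rule norm_cauchy_schwarz)
    also have "\<dots> \<le> L * norm (s *\<^sub>R u) * norm u"
      using lip[of "x + s *\<^sub>R u" x] by (simp add: mult_right_mono)
    finally show ?thesis using that by (simp add: power2_eq_square)
  qed
  then have "\<phi> 1 \<le> \<phi> 0"
    using \<phi>_deriv by (intro DERIV_nonpos_imp_nonincreasing[of 0 1 \<phi>]) force+
  then show ?thesis unfolding \<phi>_def u_def by simp
qed

lemma power2_norm_gradient_le:
  fixes h :: "'a::euclidean_space \<Rightarrow> real" and gr :: "'a \<Rightarrow> 'a"
  assumes deriv: "\<And>x. (h has_derivative (\<lambda>v. gr x \<bullet> v)) (at x)"
    and lip: "\<And>x y. norm (gr x - gr y) \<le> L * norm (x - y)"
    and min: "\<And>y. h xstar \<le> h y"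
  shows "(norm (gr x))\<^sup>2 \<le> 2 * L * (h x - h xstar)"
proof -
  have step: "h xstar \<le> h x - s * (norm (gr x))\<^sup>2 + L / 2 * s\<^sup>2 * (norm (gr x))\<^sup>2" for s
  proof -
    have "h xstar \<le> h (x - s *\<^sub>R gr x)" by (rule min)
    also have "\<dots> \<le> h x + gr x \<bullet> (- (s *\<^sub>R gr x)) + L / 2 * (norm (- (s *\<^sub>R gr x)))\<^sup>2"
      using descent_lemma[OF deriv lip, of "x - s *\<^sub>R gr x" x] by simp
    also have "\<dots> = h x - s * (norm (gr x))\<^sup>2 + L / 2 * s\<^sup>2 * (norm (gr x))\<^sup>2"
      by (simp add: power2_norm_eq_inner power_mult_distrib)
    finally show ?thesis .
  qed
  consider "L = 0" | "L > 0"
    using lipschitz_constant_nonneg[OF lip] by linarith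
  then show ?thesis
  proof cases
    case 1
    show ?thesis
    proof (rule ccontr)
      assume "\<not> ?thesis"
      then have "(norm (gr x))\<^sup>2 > 0" using 1 by simp
      then show False
        using step[of "(h x - h xstar + 1) / (norm (gr x))\<^sup>2"] 1 by simp
    qed
  next
    case 2
    \<comment> \<open>the step size 1/L minimizes the quadratic upper bound\<close>
    have "h xstar \<le> h x - (norm (gr x))\<^sup>2 / (2 * L)"
      using step[of "1 / L"] 2 by (simp add: field_simps power2_eq_square)
    then show ?thesis
      using 2 by (simp add: field_simps)
  qed
qed

lemma power2_norm_add_le:
  fixes a b :: "'a::real_normed_vector"
  shows "(norm (a + b))\<^sup>2 \<le> 2 * (norm a)\<^sup>2 + 2 * (norm b)\<^sup>2"
proof -
  have "(norm (a + b))\<^sup>2 \<le> (norm a + norm b)\<^sup>2"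
    by (simp add: norm_triangle_ineq power_mono)
  also have "\<dots> \<le> 2 * (norm a)\<^sup>2 + 2 * (norm b)\<^sup>2"
    using zero_le_power2[of "norm a - norm b"] unfolding power2_diff power2_sum by linarith
  finally show ?thesis .
qed

lemma power2_norm_average_le:
  fixes v :: "'b \<Rightarrow> 'a::real_normed_vector"
  assumes "finite A" "card A = n"
  shows "(norm ((1 / real n) *\<^sub>R (\<Sum>i\<in>A. v i)))\<^sup>2 \<le> (1 / real n) * (\<Sum>i\<in>A. (norm (v i))\<^sup>2)"
proof -
  have "(norm (\<Sum>i\<in>A. v i))\<^sup>2 \<le> (\<Sum>i\<in>A. norm (v i))\<^sup>2"
    by (simp add: norm_sum power_mono)
  also have "\<dots> \<le> real n * (\<Sum>i\<in>A. (norm (v i))\<^sup>2)"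
    using sum_squared_le_sum_of_squares[of "\<lambda>i. norm (v i)" A] assms by (simp add: mult.commute)
  finally have "(norm (\<Sum>i\<in>A. v i))\<^sup>2 / (real n)\<^sup>2 \<le> real n * (\<Sum>i\<in>A. (norm (v i))\<^sup>2) / (real n)\<^sup>2"
    by (rule divide_right_mono) simp
  then show ?thesis
    by (cases "n = 0") (simp_all add: power_divide power2_eq_square)
qed

definition gbar :: "(nat \<Rightarrow> nat \<Rightarrow> 'a \<Rightarrow> 'a) \<Rightarrow> nat \<Rightarrow> nat \<Rightarrow> 'a \<Rightarrow> 'a::real_vector" where
  "gbar g M N x = (1 / real M) *\<^sub>R (\<Sum>m<M. (1 / real N) *\<^sub>R (\<Sum>j<N. g m j x))"

lemma has_derivative_fbar:
  assumes "\<And>m j. m < M \<Longrightarrow> j < N \<Longrightarrow> (f m j has_derivative (\<lambda>h. g m j x \<bullet> h)) (at x)"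
  shows "(fbar f M N has_derivative (\<lambda>h. gbar g M N x \<bullet> h)) (at x)"
proof -
  have "((\<lambda>x. (1 / real M) * (\<Sum>m<M. (1 / real N) * (\<Sum>j<N. f m j x)))
        has_derivative (\<lambda>h. (1 / real M) * (\<Sum>m<M. (1 / real N) * (\<Sum>j<N. g m j x \<bullet> h)))) (at x)"
    by (intro has_derivative_mult_right has_derivative_sum) (simp add: assms)
  moreover have "(\<lambda>h. (1 / real M) * (\<Sum>m<M. (1 / real N) * (\<Sum>j<N. g m j x \<bullet> h))) = (\<lambda>h. gbar g M N x \<bullet> h)"
    by (simp add: gbar_def inner_sum_left sum_distrib_left)
  ultimately show ?thesis unfolding fbar_def[abs_def] by simp
qed

lemma gbar_lipschitz:
  assumes "M > 0" "N > 0"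
    and "\<And>m j. m < M \<Longrightarrow> j < N \<Longrightarrow> norm (g m j x - g m j y) \<le> L * norm (x - y)"
  shows "norm (gbar g M N x - gbar g M N y) \<le> L * norm (x - y)"
proof -
  have "norm (gbar g M N x - gbar g M N y)
      = (1 / real M) * norm (\<Sum>m<M. (1 / real N) *\<^sub>R (\<Sum>j<N. g m j x - g m j y))"
    by (simp add: gbar_def flip: sum_subtractf scaleR_diff_right)
  also have "\<dots> \<le> (1 / real M) * (\<Sum>m<M. (1 / real N) * (\<Sum>j<N. norm (g m j x - g m j y)))"
    by (intro mult_left_mono order_trans[OF norm_sum] sum_mono)
       (auto intro!: divide_right_mono norm_sum)
  also have "\<dots> \<le> (1 / real M) * (\<Sum>m<M. (1 / real N) * (\<Sum>j<N. L * norm (x - y)))"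
    by (intro mult_left_mono sum_mono) (auto simp: assms)
  also have "\<dots> = L * norm (x - y)"
    using assms by simp
  finally show ?thesis .
qed

definition cohort_average ::
    "nat \<Rightarrow> nat \<Rightarrow> nat \<Rightarrow> (nat \<Rightarrow> nat set) \<Rightarrow> (nat \<Rightarrow> nat \<Rightarrow> nat \<Rightarrow> 'a) \<Rightarrow> 'a::real_vector" where
  "cohort_average R C N S v =
     (1 / real R) *\<^sub>R (\<Sum>r<R. (1 / real C) *\<^sub>R (\<Sum>m\<in>S r. (1 / real N) *\<^sub>R (\<Sum>j<N. v r m j)))"

lemma cohort_average_diff:
  "cohort_average R C N S (\<lambda>r m j. v r m j - w r m j)
     = cohort_average R C N S v - cohort_average R C N S w"
  by (simp add: cohort_average_def sum_subtractf scaleR_diff_right)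

lemma power2_norm_cohort_average_le:
  fixes v :: "nat \<Rightarrow> nat \<Rightarrow> nat \<Rightarrow> 'a::real_normed_vector"
  assumes "\<And>r. r < R \<Longrightarrow> finite (S r) \<and> card (S r) = C"
  shows "(norm (cohort_average R C N S v))\<^sup>2
    \<le> 1 / (real R * real C * real N) * (\<Sum>r<R. \<Sum>m\<in>S r. \<Sum>j<N. (norm (v r m j))\<^sup>2)"
proof -
  have "(norm (cohort_average R C N S v))\<^sup>2
      \<le> (1 / real R) * (\<Sum>r<R. (1 / real C) * (\<Sum>m\<in>S r. (1 / real N) * (\<Sum>j<N. (norm (v r m j))\<^sup>2)))"
    unfolding cohort_average_def
    by (intro order_trans[OF power2_norm_average_le] mult_left_mono sum_mono) (auto simp: assms)
  also have "\<dots> = 1 / (real R * real C * real N) * (\<Sum>r<R. \<Sum>m\<in>S r. \<Sum>j<N. (norm (v r m j))\<^sup>2)"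
    by (simp add: sum_distrib_left ac_simps)
  finally show ?thesis .
qed

lemma cohort_average_permuted_eq:
  assumes "M = C * R"
    and cohorts: "\<And>r. r < R \<Longrightarrow> S r \<subseteq> {..<M}"
    and disj: "\<And>r r'. r < R \<Longrightarrow> r' < R \<Longrightarrow> r \<noteq> r' \<Longrightarrow> S r \<inter> S r' = {}"
    and cover: "(\<Union>r<R. S r) = {..<M}"
    and perm: "\<And>m. m < M \<Longrightarrow> bij_betw (p m) {..<N} {..<N}"
  shows "cohort_average R C N S (\<lambda>r m j. w m (p m j))
    = (1 / real M) *\<^sub>R (\<Sum>m<M. (1 / real N) *\<^sub>R (\<Sum>j<N. w m j))"
proof -
  let ?w = "\<lambda>m. (1 / real N) *\<^sub>R (\<Sum>j<N. w m j)"
  have "cohort_average R C N S (\<lambda>r m j. w m (p m j))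
      = (1 / real R) *\<^sub>R (1 / real C) *\<^sub>R (\<Sum>r<R. \<Sum>m\<in>S r. (1 / real N) *\<^sub>R (\<Sum>j<N. w m (p m j)))"
    unfolding cohort_average_def by (simp only: scaleR_sum_right)
  also have "(\<Sum>r<R. \<Sum>m\<in>S r. (1 / real N) *\<^sub>R (\<Sum>j<N. w m (p m j))) = (\<Sum>r<R. \<Sum>m\<in>S r. ?w m)"
  proof (intro sum.cong refl)
    fix r m assume "r \<in> {..<R}" "m \<in> S r"
    then have "m < M" using cohorts by auto
    then show "(1 / real N) *\<^sub>R (\<Sum>j<N. w m (p m j)) = ?w m"
      using sum.reindex_bij_betw[OF perm, of m "w m"] by simp
  qed
  also have "\<dots> = (\<Sum>m\<in>(\<Union>r<R. S r). ?w m)"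
    using cohorts disj by (intro sum.UNION_disjoint[symmetric]) (auto intro: finite_subset)
  also have "\<dots> = (\<Sum>m<M. ?w m)"
    using cover by simp
  finally show ?thesis
    using assms(1) by simp
qed

theorem lemma7:
  fixes f :: "nat \<Rightarrow> nat \<Rightarrow> 'a::euclidean_space \<Rightarrow> real"
    and g :: "nat \<Rightarrow> nat \<Rightarrow> 'a \<Rightarrow> 'a"
    and L \<gamma> \<eta> \<theta> :: real and M N C R :: nat
    and S :: "nat \<Rightarrow> nat \<Rightarrow> nat set" and p :: "nat \<Rightarrow> nat \<Rightarrow> nat \<Rightarrow> nat"
    and x0 xstar :: 'a and t :: nat
  assumes "N > 0" and "C > 0" and "R > 0" and "M = C * R"
    and "\<gamma> > 0" and "\<eta> > 0" and "\<theta> > 0"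
    and grad: "\<And>m j x. m < M \<Longrightarrow> j < N \<Longrightarrow> (f m j has_derivative (\<lambda>h. g m j x \<bullet> h)) (at x)"
    and smooth: "\<And>m j x y. m < M \<Longrightarrow> j < N \<Longrightarrow> norm (g m j x - g m j y) \<le> L * norm (x - y)"
    and min: "\<And>y. fbar f M N xstar \<le> fbar f M N y"
    and cohorts: "\<And>t r. r < R \<Longrightarrow> S t r \<subseteq> {..<M} \<and> card (S t r) = C"
    and disj: "\<And>t r r'. r < R \<Longrightarrow> r' < R \<Longrightarrow> r \<noteq> r' \<Longrightarrow> S t r \<inter> S t r' = {}"
    and cover: "\<And>t. (\<Union>r<R. S t r) = {..<M}"
    and perm: "\<And>t m. m < M \<Longrightarrow> bij_betw (p t m) {..<N} {..<N}"
  shows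
    "let xt = meta g \<gamma> \<eta> \<theta> N C R S p x0 t;
         z = (\<lambda>r. srv g \<gamma> \<eta> N C (S t) (p t) xt r);
         V = (1 / (real R * real C * real N)) *
             (\<Sum>r<R. \<Sum>m\<in>S t r. \<Sum>j<N. (norm (xt - loc g \<gamma> (p t m) m (z r) j))\<^sup>2)
     in (norm ((1 / real R) *\<^sub>R (\<Sum>r<R. (1 / real C) *\<^sub>R (\<Sum>m\<in>S t r.
            (1 / real N) *\<^sub>R (\<Sum>j<N. g m (p t m j) (loc g \<gamma> (p t m) m (z r) j))))))\<^sup>2
        \<le> 2 * L\<^sup>2 * V + 4 * L * (fbar f M N xt - fbar f M N xstar)"
proof -
  define xt where "xt = meta g \<gamma> \<eta> \<theta> N C R S p x0 t"
  define y where "y r m j = loc g \<gamma> (p t m) m (srv g \<gamma> \<eta> N C (S t) (p t) xt r) j" for r m j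
  define V where "V = (1 / (real R * real C * real N)) *
    (\<Sum>r<R. \<Sum>m\<in>S t r. \<Sum>j<N. (norm (xt - y r m j))\<^sup>2)"
  let ?avg = "cohort_average R C N (S t)"
  let ?drift = "\<lambda>r m j. g m (p t m j) (y r m j) - g m (p t m j) xt"
  have "M > 0" using assms(2-4) by simp
  have index_bound: "m < M" "p t m j < N" if "r < R" "m \<in> S t r" "j < N" for r m j
    using cohorts[of r t] perm[of m t] that by (auto dest: bij_betw_apply)
  have split: "?avg (\<lambda>r m j. g m (p t m j) (y r m j)) = ?avg ?drift + gbar g M N xt"
    using cohort_average_permuted_eq[of M C R "S t" "p t" N "\<lambda>m j. g m j xt"]
      assms(4) cohorts disj cover perm
    by (simp add: cohort_average_diff gbar_def)
  have "(norm (?avg ?drift))\<^sup>2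
      \<le> 1 / (real R * real C * real N) * (\<Sum>r<R. \<Sum>m\<in>S t r. \<Sum>j<N. (norm (?drift r m j))\<^sup>2)"
    using cohorts by (intro power2_norm_cohort_average_le) (auto intro: finite_subset)
  also have "\<dots> \<le> L\<^sup>2 * V"
    unfolding V_def sum_distrib_left mult.left_commute[of "L\<^sup>2"]
    by (intro mult_left_mono sum_mono)
       (auto simp: norm_minus_commute power_mult_distrib[symmetric] intro!: power_mono smooth index_bound)
  finally have drift: "(norm (?avg ?drift))\<^sup>2 \<le> L\<^sup>2 * V" .
  have gradient_bound: "(norm (gbar g M N xt))\<^sup>2 \<le> 2 * L * (fbar f M N xt - fbar f M N xstar)"
    using \<open>M > 0\<close> assms(1) grad smooth min
    by (intro power2_norm_gradient_le has_derivative_fbar gbar_lipschitz) auto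
  have "(norm (?avg (\<lambda>r m j. g m (p t m j) (y r m j))))\<^sup>2
      \<le> 2 * L\<^sup>2 * V + 4 * L * (fbar f M N xt - fbar f M N xstar)"
    using power2_norm_add_le[of "?avg ?drift" "gbar g M N xt"] split drift gradient_bound by simp
  then show ?thesis
    unfolding Let_def cohort_average_def xt_def y_def V_def .
qed

end
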